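(* Let $\Gamma=\langle S\mid R\rangle$ be a finitely presented group and let $\varphi_n,\psi_n\colon S\to\mathrm U(k_n)$ be asymptotic representations with respect to a family of submultiplicative, unitarily invariant norms, such that $\max_{s\in S}\|\varphi_n(s)-\psi_n(s)\|=O_{\mathcal U}(\mathrm{def}(\varphi_n))$ and $\mathrm{def}(\psi_n)=o_{\mathcal U}(\mathrm{def}(\varphi_n))$. Then the $2$-cocycle $\alpha$ associated to $(\varphi_n)$ (described in the context) is trivial in $H^2(\Gamma,\mathrm M_{\mathcal U})$, i.e. there is $\beta\colon\Gamma\to\mathrm M_{\mathcal U}$ with $\alpha(g,h)=\varphi_{\mathcal U}(g)\beta(h)\varphi_{\mathcal U}(g)^*-\beta(gh)+\beta(g)$ for all $g,h\in\Gamma$.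
   Context: Fix a non-principal ultrafilter $\mathcal U$ on $\mathbb N$; $x_n=O_{\mathcal U}(y_n)$ means $x_n\le Cy_n$ for all $n$ in a set belonging to $\mathcal U$, some constant $C$; $x_n=o_{\mathcal U}(y_n)$ means $x_n=\varepsilon_ny_n$ with $\varepsilon_n\ge0$, $\lim_{n\to\mathcal U}\varepsilon_n=0$. $S,R$ are finite, $\mathbb F_S$ is free on $S$. For each $k$ a unitarily invariant, submultiplicative norm $\|\cdot\|$ on $\mathrm M_k(\mathbb C)$ is fixed. For $\varphi\colon S\to\mathrm U(k)$ (extended to $\mathbb F_S$), $\mathrm{def}(\varphi)=\max_{r\in R}\|\varphi(r)-1_k\|$; a sequence $\varphi_n\colon S\to\mathrm U(k_n)$ is an asymptotic representation if $\lim_{n\to\mathcal U}\mathrm{def}(\varphi_n)=0$. $\mathrm M_{\mathcal U}$ is the Banach space of bounded sequences $(T_n)$, $T_n\in\mathrm M_{k_n}(\mathbb C)$, modulo those with $\lim_{n\to\mathcal U}\|T_n\|=0$; $\mathrm U_{\mathcal U}$ is $\prod_n\mathrm U(k_n)$ modulo sequences with $\lim_{n\to\mathcal U}\|u_n-1\|=0$, acting on $\mathrm M_{\mathcal U}$ by left/right multiplication; $\varphi_{\mathcal U}\colon\Gamma\to\mathrm U_{\mathcal U}$ is the homomorphism induced by $(\varphi_n)$. The associated cocycle: fix a section $\sigma\colon\Gamma\to\mathbb F_S$ of the canonical surjection and $\tilde\varphi_n\colon\Gamma\to\mathrm U(k_n)$ with $\tilde\varphi_n(1_\Gamma)=1$,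 $\tilde\varphi_n(g^{-1})=\tilde\varphi_n(g)^*$, $\|\varphi_n(\sigma(g))-\tilde\varphi_n(g)\|=O_{\mathcal U}(\mathrm{def}(\varphi_n))$; let $c_n(g,h)=(\tilde\varphi_n(g)\tilde\varphi_n(h)-\tilde\varphi_n(gh))/\mathrm{def}(\varphi_n)$ if $\mathrm{def}(\varphi_n)>0$, else $0$, $c(g,h)\in\mathrm M_{\mathcal U}$ its class, and $\alpha(g,h)=c(g,h)\varphi_{\mathcal U}(gh)^*$. *)

theory Defs
  imports "Jordan_Normal_Form.Matrix"
begin

definition nonprincipal_ultrafilter :: "nat filter \<Rightarrow> bool" where
  "nonprincipal_ultrafilter U \<longleftrightarrow>
     U \<noteq> bot \<and> (\<forall>P. eventually P U \<or> eventually (\<lambda>n. \<not> P n) U)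
     \<and> (\<forall>m. \<not> eventually (\<lambda>n. n = m) U)"

definition bigO_U :: "nat filter \<Rightarrow> (nat \<Rightarrow> real) \<Rightarrow> (nat \<Rightarrow> real) \<Rightarrow> bool" where
  "bigO_U U x y \<longleftrightarrow> (\<exists>C. eventually (\<lambda>n. x n \<le> C * y n) U)"

definition smallo_U :: "nat filter \<Rightarrow> (nat \<Rightarrow> real) \<Rightarrow> (nat \<Rightarrow> real) \<Rightarrow> bool" where
  "smallo_U U x y \<longleftrightarrow> (\<exists>eps. (\<forall>n. eps n \<ge> 0) \<and> (eps \<longlongrightarrow> 0) U \<and> (\<forall>n. x n = eps n * y n))"

definition adj :: "complex mat \<Rightarrow> complex mat" where
  "adj A = transpose_mat (map_mat cnj A)"

definition unitary_mat :: "nat \<Rightarrow> complex mat \<Rightarrow> bool" where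
  "unitary_mat k A \<longleftrightarrow> A \<in> carrier_mat k k \<and> adj A * A = 1\<^sub>m k \<and> A * adj A = 1\<^sub>m k"

definition good_norm_family :: "(nat \<Rightarrow> complex mat \<Rightarrow> real) \<Rightarrow> bool" where
  "good_norm_family nrm \<longleftrightarrow> (\<forall>k.
     (\<forall>A\<in>carrier_mat k k. nrm k A \<ge> 0 \<and> (nrm k A = 0 \<longleftrightarrow> A = 0\<^sub>m k k)) \<and>
     (\<forall>A\<in>carrier_mat k k. \<forall>B\<in>carrier_mat k k. nrm k (A + B) \<le> nrm k A + nrm k B) \<and>
     (\<forall>A\<in>carrier_mat k k. \<forall>c. nrm k (c \<cdot>\<^sub>m A) = cmod c * nrm k A) \<and>
     (\<forall>A\<in>carrier_mat k k. \<forall>B\<in>carrier_mat k k. nrm k (A * B) \<le> nrm k A * nrm k B) \<and>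
     (\<forall>A\<in>carrier_mat k k. \<forall>V W. unitary_mat k V \<longrightarrow> unitary_mat k W \<longrightarrow>
         nrm k (V * A * W) = nrm k A))"

text \<open>A letter (s, False) stands for s, (s, True) for s^{-1}; elements of F_S are
  represented by words (lists of letters).\<close>
type_synonym 's word = "('s \<times> bool) list"

definition inv_letter :: "'s \<times> bool \<Rightarrow> 's \<times> bool" where
  "inv_letter x = (fst x, \<not> snd x)"

definition inv_word :: "'s word \<Rightarrow> 's word" where
  "inv_word w = rev (map inv_letter w)"

text \<open>The congruence on words whose classes are the elements of
  Gamma = F_S / <<R>>: free reduction plus relators.\<close>
inductive word_eq :: "'s word set \<Rightarrow> 's word \<Rightarrow> 's word \<Rightarrow> bool" for R where
  refl: "word_eq R u u"
| sym: "word_eq R u v \<Longrightarrow> word_eq R v u"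
| trans: "word_eq R u v \<Longrightarrow> word_eq R v w \<Longrightarrow> word_eq R u w"
| cong: "word_eq R u v \<Longrightarrow> word_eq R (a @ u @ b) (a @ v @ b)"
| cancel: "word_eq R [x, inv_letter x] []"
| rel: "r \<in> R \<Longrightarrow> word_eq R r []"

definition wclass :: "'s word set \<Rightarrow> 's word \<Rightarrow> 's word set" where
  "wclass R w = {v. word_eq R w v}"

text \<open>The carrier of Gamma = <S | R> (S = UNIV of the generator type).\<close>
definition Gamma :: "'s word set \<Rightarrow> 's word set set" where
  "Gamma R = range (wclass R)"

definition gmul :: "'s word set \<Rightarrow> 's word set \<Rightarrow> 's word set \<Rightarrow> 's word set" where
  "gmul R g h = {w. \<exists>u\<in>g. \<exists>v\<in>h. word_eq R (u @ v) w}"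

definition gone :: "'s word set \<Rightarrow> 's word set" where
  "gone R = wclass R []"

definition ginv :: "'s word set \<Rightarrow> 's word set \<Rightarrow> 's word set" where
  "ginv R g = {w. \<exists>u\<in>g. word_eq R (inv_word u) w}"

fun weval :: "('s \<Rightarrow> complex mat) \<Rightarrow> nat \<Rightarrow> 's word \<Rightarrow> complex mat" where
  "weval phi k [] = 1\<^sub>m k"
| "weval phi k (x # w) = (if snd x then adj (phi (fst x)) else phi (fst x)) * weval phi k w"

definition defect :: "(nat \<Rightarrow> complex mat \<Rightarrow> real) \<Rightarrow> 's word set \<Rightarrow> nat \<Rightarrow> ('s \<Rightarrow> complex mat) \<Rightarrow> real" where
  "defect nrm R k phi = (if R = {} then 0 else Max ((\<lambda>r. nrm k (weval phi k r - 1\<^sub>m k)) ` R))"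

definition asymptotic_rep ::
  "nat filter \<Rightarrow> (nat \<Rightarrow> complex mat \<Rightarrow> real) \<Rightarrow> 's word set \<Rightarrow> (nat \<Rightarrow> nat) \<Rightarrow> (nat \<Rightarrow> 's \<Rightarrow> complex mat) \<Rightarrow> bool" where
  "asymptotic_rep U nrm R k phi \<longleftrightarrow>
     (\<forall>n s. unitary_mat (k n) (phi n s)) \<and>
     ((\<lambda>n. defect nrm R (k n) (phi n)) \<longlongrightarrow> 0) U"

definition cocycle_c ::
  "(nat \<Rightarrow> complex mat \<Rightarrow> real) \<Rightarrow> 's word set \<Rightarrow> (nat \<Rightarrow> nat) \<Rightarrow> (nat \<Rightarrow> 's \<Rightarrow> complex mat)
   \<Rightarrow> (nat \<Rightarrow> 's word set \<Rightarrow> complex mat) \<Rightarrow> 's word set \<Rightarrow> 's word set \<Rightarrow> nat \<Rightarrow> complex mat" where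
  "cocycle_c nrm R k phi phit g h n =
     (let d = defect nrm R (k n) (phi n) in
      if d > 0 then (1 / complex_of_real d) \<cdot>\<^sub>m (phit n g * phit n h - phit n (gmul R g h))
      else 0\<^sub>m (k n) (k n))"

text \<open>Representative sequence of alpha(g,h) = c(g,h) phi_U(gh)^*, where phi_U(x) is
  the class of (phi_n(sigma x))_n.\<close>
definition cocycle_alpha ::
  "(nat \<Rightarrow> complex mat \<Rightarrow> real) \<Rightarrow> 's word set \<Rightarrow> (nat \<Rightarrow> nat) \<Rightarrow> (nat \<Rightarrow> 's \<Rightarrow> complex mat)
   \<Rightarrow> ('s word set \<Rightarrow> 's word) \<Rightarrow> (nat \<Rightarrow> 's word set \<Rightarrow> complex mat)
   \<Rightarrow> 's word set \<Rightarrow> 's word set \<Rightarrow> nat \<Rightarrow> complex mat" where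
  "cocycle_alpha nrm R k phi sigma phit g h n =
     cocycle_c nrm R k phi phit g h n * adj (weval (phi n) (k n) (sigma (gmul R g h)))"

end

theory Submission
  imports Defs
begin

(* Write T, F and P for phit, for phi evaluated on the chosen words sigma and for psi evaluated
   on the same words, and take beta(g) = (T g - P g) (F g)^* / def(phi_n).  A ring identity, valid
   as soon as F g, F h, F (gh) are invertible, writes (T g T h - T gh) (F gh)^* - (delta beta)(g, h)
   as a sum of four terms: two contain T - P together with F g F h - F gh, one is
   (T g - F g)(T h - F h) - (P g - F g)(P h - F h), and the last is P g P h - P gh.  By unitary
   invariance and submultiplicativity the first three are O(def(phi_n)^2), and the last is
   O(def(psi_n)) = o(def(phi_n)).  Dividing by def(phi_n), alpha - delta beta tends to 0.  Since
   beta(g) is bounded only along the filter, it is replaced by 0 off a set where the bound holds. *)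

lemma square_mat_closed:
  fixes A B :: "complex mat"
  assumes "A \<in> carrier_mat m m" "B \<in> carrier_mat m m"
  shows "A * B \<in> carrier_mat m m" "A + B \<in> carrier_mat m m" "A - B \<in> carrier_mat m m"
  using assms by (auto intro: minus_carrier_mat)

lemma square_mat_assoc:
  fixes A :: "'a::semiring_0 mat"
  shows "A \<in> carrier_mat m m \<Longrightarrow> B \<in> carrier_mat m m \<Longrightarrow> C \<in> carrier_mat m m \<Longrightarrow> A * B * C = A * (B * C)"
  by (rule assoc_mult_mat)

lemma square_mat_one:
  fixes A :: "'a::semiring_1 mat"
  shows "A \<in> carrier_mat m m \<Longrightarrow> 1\<^sub>m m * A = A"
  "A \<in> carrier_mat m m \<Longrightarrow> A * 1\<^sub>m m = A"
  by (fact left_mult_one_mat right_mult_one_mat)+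

lemma adj_carrier_mat [simp]: "A \<in> carrier_mat m m \<Longrightarrow> adj A \<in> carrier_mat m m"
  unfolding adj_def by auto

lemma adj_adj [simp]: "adj (adj A) = A"
  unfolding adj_def by (rule eq_matI) auto

lemma adj_one_mat [simp]: "adj (1\<^sub>m m) = 1\<^sub>m m"
  unfolding adj_def by (rule eq_matI) auto

lemma adj_mult:
  assumes "A \<in> carrier_mat m m" "B \<in> carrier_mat m m"
  shows "adj (A * B) = adj B * adj A"
  unfolding adj_def using assms
  by (intro eq_matI) (auto simp: scalar_prod_def mult.commute intro!: sum.cong)

lemma unitary_mat_carrier: "unitary_mat m A \<Longrightarrow> A \<in> carrier_mat m m"
  unfolding unitary_mat_def by blast

lemma unitary_mat_one: "unitary_mat m (1\<^sub>m m)"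
  unfolding unitary_mat_def by simp

lemma unitary_mat_adj: "unitary_mat m A \<Longrightarrow> unitary_mat m (adj A)"
  unfolding unitary_mat_def by simp

lemma unitary_mat_mult:
  assumes A: "unitary_mat m A" and B: "unitary_mat m B"
  shows "unitary_mat m (A * B)"
proof -
  have carrier: "A \<in> carrier_mat m m" "B \<in> carrier_mat m m"
    using A B by (simp_all add: unitary_mat_carrier)
  have "adj (A * B) * (A * B) = adj B * ((adj A * A) * B)"
    using carrier by (simp add: adj_mult square_mat_closed square_mat_assoc[where m=m])
  moreover have "A * B * adj (A * B) = A * ((B * adj B) * adj A)"
    using carrier by (simp add: adj_mult square_mat_closed square_mat_assoc[where m=m])
  ultimately show ?thesis
    using A B carrier unfolding unitary_mat_def by (simp add: square_mat_closed square_mat_one)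
qed

lemma adj_diff_unitary:
  assumes A: "unitary_mat m A" and B: "unitary_mat m B"
  shows "adj A - adj B = adj A * (B - A) * adj B"
proof -
  have carrier: "A \<in> carrier_mat m m" "B \<in> carrier_mat m m"
    using A B by (simp_all add: unitary_mat_carrier)
  have "adj A * (B - A) * adj B = adj A * (B * adj B) - (adj A * A) * adj B"
    using carrier by (simp add: mult_minus_distrib_mat[of _ m m _ m] minus_mult_distrib_mat[of _ m m _ _ m]
        square_mat_closed square_mat_assoc[where m=m])
  then show ?thesis
    using A B carrier unfolding unitary_mat_def by (simp add: square_mat_one)
qed

lemma ring_mat_a_minus:
  assumes "A \<in> carrier_mat m m" "B \<in> carrier_mat m m"
  shows "a_minus (ring_mat TYPE(complex) m ()) A B = A - B"
proof -
  interpret ring "ring_mat TYPE(complex) m ()" by (rule ring_mat)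
  have "a_inv (ring_mat TYPE(complex) m ()) B = - B"
    by (rule minus_equality) (use assms in \<open>auto simp: ring_mat_simps\<close>)
  then show ?thesis
    using assms by (simp add: minus_eq ring_mat_simps minus_add_uminus_mat)
qed

section \<open>The cocycle identity\<close>

lemma (in ring) coboundary_defect_identity:
  assumes carrier: "Tg \<in> carrier R" "Th \<in> carrier R" "Tgh \<in> carrier R"
      "Pg \<in> carrier R" "Ph \<in> carrier R" "Pgh \<in> carrier R"
      "Fg \<in> carrier R" "Fh \<in> carrier R" "Fgh \<in> carrier R"
      "Gg \<in> carrier R" "Gh \<in> carrier R" "Ggh \<in> carrier R"
    and inverse: "Gg \<otimes> Fg = \<one>" "Fg \<otimes> Gg = \<one>" "Gh \<otimes> Fh = \<one>" "Fh \<otimes> Gh = \<one>"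
      "Ggh \<otimes> Fgh = \<one>" "Fgh \<otimes> Ggh = \<one>"
  shows "(Tg \<otimes> Th \<ominus> Tgh) \<otimes> Ggh \<ominus> (Fg \<otimes> (Th \<ominus> Ph) \<otimes> Gh \<otimes> Gg \<ominus> (Tgh \<ominus> Pgh) \<otimes> Ggh \<oplus> (Tg \<ominus> Pg) \<otimes> Gg)
    = (Tg \<ominus> Pg) \<otimes> Gg \<otimes> (Fg \<otimes> Fh \<ominus> Fgh) \<otimes> Ggh
      \<oplus> Fg \<otimes> (Th \<ominus> Ph) \<otimes> (Gh \<otimes> Gg) \<otimes> (Fg \<otimes> Fh \<ominus> Fgh) \<otimes> Ggh
      \<oplus> ((Tg \<ominus> Fg) \<otimes> (Th \<ominus> Fh) \<ominus> (Pg \<ominus> Fg) \<otimes> (Ph \<ominus> Fh)) \<otimes> Ggh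
      \<oplus> (Pg \<otimes> Ph \<ominus> Pgh) \<otimes> Ggh"
proof -
  have cancel: "Gg \<otimes> (Fg \<otimes> x) = x" "Fg \<otimes> (Gg \<otimes> x) = x" "Gh \<otimes> (Fh \<otimes> x) = x"
      "Fh \<otimes> (Gh \<otimes> x) = x" "Ggh \<otimes> (Fgh \<otimes> x) = x" "Fgh \<otimes> (Ggh \<otimes> x) = x"
    if "x \<in> carrier R" for x
    using that carrier inverse by (simp_all flip: m_assoc)
  show ?thesis
    using carrier inverse cancel by algebra (use carrier in simp)
qed

(* (delta beta)(g, h) = phi(g) beta(h) phi(g)^* - beta(gh) + beta(g), with Vg = phi(g), bg = beta(g),
   bh = beta(h) and bgh = beta(gh). *)
definition coboundary :: "complex mat \<Rightarrow> complex mat \<Rightarrow> complex mat \<Rightarrow> complex mat \<Rightarrow> complex mat" where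
  "coboundary Vg bg bh bgh = Vg * bh * adj Vg - bgh + bg"

lemma coboundary_smult:
  assumes "Vg \<in> carrier_mat m m" "bg \<in> carrier_mat m m" "bh \<in> carrier_mat m m" "bgh \<in> carrier_mat m m"
  shows "coboundary Vg (s \<cdot>\<^sub>m bg) (s \<cdot>\<^sub>m bh) (s \<cdot>\<^sub>m bgh) = s \<cdot>\<^sub>m coboundary Vg bg bh bgh"
proof -
  have "Vg * (s \<cdot>\<^sub>m bh) * adj Vg = s \<cdot>\<^sub>m (Vg * bh) * adj Vg"
    by (simp only: mult_smult_distrib[OF assms(1,3)])
  also have "\<dots> = s \<cdot>\<^sub>m (Vg * bh * adj Vg)"
    using assms by (intro mult_smult_assoc_mat[of _ m m _ m]) simp_all
  finally have conj: "Vg * (s \<cdot>\<^sub>m bh) * adj Vg = s \<cdot>\<^sub>m (Vg * bh * adj Vg)" .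
  have "s \<cdot>\<^sub>m X - s \<cdot>\<^sub>m bgh + s \<cdot>\<^sub>m bg = s \<cdot>\<^sub>m (X - bgh + bg)" if "X \<in> carrier_mat m m" for X
    using that assms by (intro eq_matI) (auto simp: algebra_simps)
  then show ?thesis
    unfolding coboundary_def conj using assms by (simp add: square_mat_closed)
qed

lemma coboundary_zero:
  assumes "Vg \<in> carrier_mat m m"
  shows "coboundary Vg (0\<^sub>m m m) (0\<^sub>m m m) (0\<^sub>m m m) = 0\<^sub>m m m"
proof -
  have "Vg * 0\<^sub>m m m * adj Vg = 0\<^sub>m m m"
    using assms right_mult_zero_mat[of Vg m m m] left_mult_zero_mat[of "adj Vg" m m m] by simp
  then show ?thesis
    unfolding coboundary_def by (intro eq_matI) auto
qed

lemma cocycle_minus_coboundary_decomp: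
  fixes Tg Th Tgh Pg Ph Pgh :: "complex mat"
  assumes carrier: "Tg \<in> carrier_mat m m" "Th \<in> carrier_mat m m" "Tgh \<in> carrier_mat m m"
      "Pg \<in> carrier_mat m m" "Ph \<in> carrier_mat m m" "Pgh \<in> carrier_mat m m"
    and unitary: "unitary_mat m Fg" "unitary_mat m Fh" "unitary_mat m Fgh"
  shows "(Tg * Th - Tgh) * adj Fgh
      - coboundary Fg ((Tg - Pg) * adj Fg) ((Th - Ph) * adj Fh) ((Tgh - Pgh) * adj Fgh)
    = (Tg - Pg) * adj Fg * (Fg * Fh - Fgh) * adj Fgh
      + Fg * (Th - Ph) * (adj Fh * adj Fg) * (Fg * Fh - Fgh) * adj Fgh
      + ((Tg - Fg) * (Th - Fh) - (Pg - Fg) * (Ph - Fh)) * adj Fgh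
      + (Pg * Ph - Pgh) * adj Fgh"
proof -
  interpret ring "ring_mat TYPE(complex) m ()" by (rule ring_mat)
  note F = unitary[THEN unitary_mat_carrier]
  have "Fg * ((Th - Ph) * adj Fh) * adj Fg = Fg * (Th - Ph) * adj Fh * adj Fg"
    using carrier F by (simp add: square_mat_closed square_mat_assoc[where m=m])
  then show ?thesis
    unfolding coboundary_def
    using coboundary_defect_identity[of Tg Th Tgh Pg Ph Pgh Fg Fh Fgh "adj Fg" "adj Fh" "adj Fgh"]
      carrier F unitary
    by (simp add: unitary_mat_def ring_mat_simps ring_mat_a_minus square_mat_closed)
qed

lemma weval_unitary: "(\<And>s. unitary_mat m (phi s)) \<Longrightarrow> unitary_mat m (weval phi m w)"
  by (induction w) (auto simp: unitary_mat_one intro!: unitary_mat_mult unitary_mat_adj)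

lemma weval_carrier_mat: "(\<And>s. unitary_mat m (phi s)) \<Longrightarrow> weval phi m w \<in> carrier_mat m m"
  by (rule unitary_mat_carrier, rule weval_unitary)

lemma weval_append:
  assumes "\<And>s. unitary_mat m (phi s)"
  shows "weval phi m (u @ v) = weval phi m u * weval phi m v"
proof (induction u)
  note carrier = weval_unitary[of m phi, OF assms, THEN unitary_mat_carrier]
  case Nil
  show ?case
    using carrier[of v] by simp
next
  note carrier = weval_unitary[of m phi, OF assms, THEN unitary_mat_carrier]
  case (Cons x u)
  have "(if snd x then adj (phi (fst x)) else phi (fst x)) \<in> carrier_mat m m"
    using assms unitary_mat_carrier by auto
  then show ?case
    using Cons carrier[of u] carrier[of v] by (simp add: square_mat_assoc[where m=m])
qed

lemma weval_cancel: "(\<And>s. unitary_mat m (phi s)) \<Longrightarrow> weval phi m [x, inv_letter x] = 1\<^sub>m m"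
  by (cases "snd x") (auto simp: inv_letter_def unitary_mat_def square_mat_one)

lemma word_eq_append: "word_eq R u u' \<Longrightarrow> word_eq R v v' \<Longrightarrow> word_eq R (u @ v) (u' @ v')"
  using word_eq.cong[of R u u' "[]" v] word_eq.cong[of R v v' u' "[]"] word_eq.trans by fastforce

lemma gmul_wclass: "gmul R (wclass R u) (wclass R v) = wclass R (u @ v)"
  unfolding gmul_def wclass_def using word_eq_append word_eq.trans word_eq.refl by blast

lemma gmul_Gamma: "g \<in> Gamma R \<Longrightarrow> h \<in> Gamma R \<Longrightarrow> gmul R g h \<in> Gamma R"
  unfolding Gamma_def using gmul_wclass by blast

lemma word_eq_if_mem_gmul:
  assumes "g \<in> Gamma R" "h \<in> Gamma R" "u \<in> g" "v \<in> h" "w \<in> gmul R g h"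
  shows "word_eq R (u @ v) w"
proof -
  obtain u' v' where g: "g = wclass R u'" and h: "h = wclass R v'"
    using assms(1,2) unfolding Gamma_def by blast
  have "word_eq R u' u" "word_eq R v' v" "word_eq R (u' @ v') w"
    using assms(3-5) unfolding g h gmul_wclass by (auto simp: wclass_def)
  then show ?thesis
    using word_eq_append word_eq.sym word_eq.trans by blast
qed

lemma bigO_U_add:
  assumes "bigO_U F x z" "bigO_U F y z"
  shows "bigO_U F (\<lambda>n. x n + y n) z"
proof -
  obtain C C' where "eventually (\<lambda>n. x n \<le> C * z n) F" "eventually (\<lambda>n. y n \<le> C' * z n) F"
    using assms unfolding bigO_U_def by blast
  then have "eventually (\<lambda>n. x n + y n \<le> (C + C') * z n) F"
    by eventually_elim (simp add: distrib_right add_mono)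
  then show ?thesis
    unfolding bigO_U_def by blast
qed

lemma bigO_U_le:
  assumes "\<And>n. x n \<le> y n" "bigO_U F y z"
  shows "bigO_U F x z"
proof -
  obtain C where "eventually (\<lambda>n. y n \<le> C * z n) F"
    using assms(2) unfolding bigO_U_def by blast
  then have "eventually (\<lambda>n. x n \<le> C * z n) F"
    by eventually_elim (rule order_trans[OF assms(1)])
  then show ?thesis
    unfolding bigO_U_def by blast
qed

lemma bigO_U_mult_div_tendsto_zero:
  assumes nonneg: "\<And>n. 0 \<le> x n" "\<And>n. 0 \<le> y n" "\<And>n. 0 \<le> z n"
    and "bigO_U F x z" "bigO_U F y z" and "(z \<longlongrightarrow> 0) F"
  shows "((\<lambda>n. x n * y n / z n) \<longlongrightarrow> 0) F"
proof -
  obtain C C' where "eventually (\<lambda>n. x n \<le> C * z n) F" "eventually (\<lambda>n. y n \<le> C' * z n) F"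
    using assms(4,5) unfolding bigO_U_def by blast
  then have bound: "eventually (\<lambda>n. x n * y n / z n \<le> C * C' * z n) F"
  proof eventually_elim
    case (elim n)
    show ?case
    proof (cases "z n = 0")
      case False
      have "x n * y n \<le> (C * z n) * (C' * z n)"
        using elim nonneg[of n] by (intro mult_mono) (auto intro: order_trans)
      then show ?thesis
        using False nonneg(3)[of n] by (simp add: divide_le_eq algebra_simps)
    qed simp
  qed
  have lim: "((\<lambda>n. C * C' * z n) \<longlongrightarrow> 0) F"
    using tendsto_mult_right_zero[OF assms(6)] by simp
  show ?thesis
    by (rule tendsto_sandwich[OF _ bound tendsto_const lim])
      (use nonneg in \<open>simp add: always_eventually\<close>)
qed

lemma smallo_U_div_tendsto_zero:
  assumes nonneg: "\<And>n. 0 \<le> x n" "\<And>n. 0 \<le> z n"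
    and le: "\<And>n. x n \<le> C * y n" and "smallo_U F y z"
  shows "((\<lambda>n. x n / z n) \<longlongrightarrow> 0) F"
proof -
  obtain eps where eps: "\<And>n. 0 \<le> eps n" "(eps \<longlongrightarrow> 0) F" "\<And>n. y n = eps n * z n"
    using assms(4) unfolding smallo_U_def by blast
  have bound: "x n / z n \<le> \<bar>C\<bar> * eps n" for n
  proof (cases "z n = 0")
    case False
    have "x n \<le> C * (eps n * z n)"
      using le[of n] eps(3)[of n] by simp
    also have "\<dots> \<le> \<bar>C\<bar> * (eps n * z n)"
      using eps(1)[of n] nonneg(2)[of n] by (intro mult_right_mono) auto
    finally show ?thesis
      using False nonneg(2)[of n] by (simp add: divide_le_eq mult.assoc)
  qed (use eps(1) in simp)
  have lim: "((\<lambda>n. \<bar>C\<bar> * eps n) \<longlongrightarrow> 0) F"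
    using tendsto_mult_right_zero[OF eps(2)] by simp
  show ?thesis
    by (rule tendsto_sandwich[OF _ _ tendsto_const lim])
      (use nonneg bound in \<open>simp_all add: always_eventually\<close>)
qed

section \<open>Unitarily invariant norms\<close>

context
  fixes nrm :: "nat \<Rightarrow> complex mat \<Rightarrow> real"
  assumes norms: "good_norm_family nrm"
begin

lemma nrm_nonneg: "A \<in> carrier_mat m m \<Longrightarrow> 0 \<le> nrm m A"
  using norms unfolding good_norm_family_def by blast

lemma nrm_zero_mat [simp]: "nrm m (0\<^sub>m m m) = 0"
  using norms zero_carrier_mat[of m m] unfolding good_norm_family_def by blast

lemma nrm_diff_self [simp]: "A \<in> carrier_mat m m \<Longrightarrow> nrm m (A - A) = 0"
  by simp

lemma nrm_add_le: "A \<in> carrier_mat m m \<Longrightarrow> B \<in> carrier_mat m m \<Longrightarrow> nrm m (A + B) \<le> nrm m A + nrm m B"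
  using norms unfolding good_norm_family_def by blast

lemma nrm_smult: "A \<in> carrier_mat m m \<Longrightarrow> nrm m (c \<cdot>\<^sub>m A) = cmod c * nrm m A"
  using norms unfolding good_norm_family_def by blast

lemma nrm_mult_le: "A \<in> carrier_mat m m \<Longrightarrow> B \<in> carrier_mat m m \<Longrightarrow> nrm m (A * B) \<le> nrm m A * nrm m B"
  using norms unfolding good_norm_family_def by blast

lemma nrm_unitary_invariant:
  "A \<in> carrier_mat m m \<Longrightarrow> unitary_mat m V \<Longrightarrow> unitary_mat m W \<Longrightarrow> nrm m (V * A * W) = nrm m A"
  using norms unfolding good_norm_family_def by blast

lemma nrm_unitary_mult_left: "A \<in> carrier_mat m m \<Longrightarrow> unitary_mat m V \<Longrightarrow> nrm m (V * A) = nrm m A"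
  using nrm_unitary_invariant[of A m V "1\<^sub>m m"] unitary_mat_one
  by (simp add: unitary_mat_carrier square_mat_one square_mat_closed)

lemma nrm_unitary_mult_right: "A \<in> carrier_mat m m \<Longrightarrow> unitary_mat m W \<Longrightarrow> nrm m (A * W) = nrm m A"
  using nrm_unitary_invariant[of A m "1\<^sub>m m" W] unitary_mat_one
  by (simp add: square_mat_one)

lemma nrm_diff_le:
  assumes "A \<in> carrier_mat m m" "B \<in> carrier_mat m m"
  shows "nrm m (A - B) \<le> nrm m A + nrm m B"
proof -
  have "A - B = A + (-1) \<cdot>\<^sub>m B"
    using assms by (intro eq_matI) auto
  then show ?thesis
    using nrm_add_le[of A m "(-1) \<cdot>\<^sub>m B"] nrm_smult[of B m "-1"] assms by simp
qed

lemma nrm_diff_commute: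
  assumes "A \<in> carrier_mat m m" "B \<in> carrier_mat m m"
  shows "nrm m (A - B) = nrm m (B - A)"
proof -
  have "B - A = (-1) \<cdot>\<^sub>m (A - B)"
    using assms by (intro eq_matI) auto
  then show ?thesis
    using nrm_smult[of "A - B" m "-1"] assms by (simp add: square_mat_closed)
qed

lemma nrm_diff_triangle:
  assumes "A \<in> carrier_mat m m" "B \<in> carrier_mat m m" "C \<in> carrier_mat m m"
  shows "nrm m (A - C) \<le> nrm m (A - B) + nrm m (B - C)"
proof -
  have "A - C = (A - B) + (B - C)"
    using assms by (intro eq_matI) auto
  then show ?thesis
    using nrm_add_le[of "A - B" m "B - C"] assms by (simp add: square_mat_closed)
qed

lemma nrm_adj_diff:
  assumes "unitary_mat m A" "unitary_mat m B"
  shows "nrm m (adj A - adj B) = nrm m (A - B)"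
proof -
  have carrier: "A \<in> carrier_mat m m" "B \<in> carrier_mat m m"
    using assms by (simp_all add: unitary_mat_carrier)
  have "nrm m (adj A - adj B) = nrm m (B - A)"
    using adj_diff_unitary[OF assms] nrm_unitary_invariant[of "B - A" m "adj A" "adj B"] assms carrier
    by (simp add: unitary_mat_adj square_mat_closed)
  then show ?thesis
    using nrm_diff_commute carrier by simp
qed

lemma nrm_unitary_mult_diff_le:
  assumes "unitary_mat m A" "unitary_mat m A'" "unitary_mat m B" "unitary_mat m B'"
  shows "nrm m (A * B - A' * B') \<le> nrm m (A - A') + nrm m (B - B')"
proof -
  have carrier: "A \<in> carrier_mat m m" "A' \<in> carrier_mat m m" "B \<in> carrier_mat m m" "B' \<in> carrier_mat m m"
    using assms by (simp_all add: unitary_mat_carrier)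
  have "A * B - A' * B' = A * (B - B') + (A - A') * B'"
    using carrier by (intro eq_matI) (auto simp: scalar_prod_def sum_subtractf algebra_simps)
  then have "nrm m (A * B - A' * B') \<le> nrm m (A * (B - B')) + nrm m ((A - A') * B')"
    using nrm_add_le carrier by (simp add: square_mat_closed)
  also have "\<dots> = nrm m (B - B') + nrm m (A - A')"
    using nrm_unitary_mult_left nrm_unitary_mult_right assms carrier by (simp add: square_mat_closed)
  finally show ?thesis
    by simp
qed

lemma nrm_mult_unitary_le:
  assumes "A \<in> carrier_mat m m" "B \<in> carrier_mat m m" "unitary_mat m V" "unitary_mat m W"
  shows "nrm m (A * V * B * W) \<le> nrm m A * nrm m B"
proof -
  have V: "V \<in> carrier_mat m m"
    using assms(3) by (rule unitary_mat_carrier)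
  have "nrm m (A * V * B * W) = nrm m (A * V * B)"
    using assms V by (simp add: nrm_unitary_mult_right square_mat_closed)
  also have "\<dots> \<le> nrm m (A * V) * nrm m B"
    using assms V by (intro nrm_mult_le) (simp_all add: square_mat_closed)
  also have "\<dots> = nrm m A * nrm m B"
    using assms by (simp add: nrm_unitary_mult_right)
  finally show ?thesis .
qed

lemma nrm_diff_mult_le:
  assumes "A \<in> carrier_mat m m" "B \<in> carrier_mat m m" "C \<in> carrier_mat m m" "D \<in> carrier_mat m m"
  shows "nrm m (A * B - C * D) \<le> nrm m A * nrm m B + nrm m C * nrm m D"
  using nrm_diff_le[of "A * B" m "C * D"] nrm_mult_le[of A m B] nrm_mult_le[of C m D] assms
  by (simp add: square_mat_closed)

lemma defect_nonneg:
  assumes "finite R" "\<And>s. unitary_mat m (phi s)"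
  shows "0 \<le> defect nrm R m phi"
proof (cases "R = {}")
  case False
  then obtain r where r: "r \<in> R"
    by blast
  have "0 \<le> nrm m (weval phi m r - 1\<^sub>m m)"
    using assms(2) by (intro nrm_nonneg) (simp add: weval_carrier_mat minus_carrier_mat)
  also have "\<dots> \<le> defect nrm R m phi"
    using r assms(1) False unfolding defect_def by (auto intro!: Max_ge)
  finally show ?thesis .
qed (simp add: defect_def)

lemma weval_diff_le:
  assumes phi: "\<And>s. unitary_mat m (phi s)" and psi: "\<And>s. unitary_mat m (psi s)"
    and close: "\<And>s. nrm m (phi s - psi s) \<le> M"
  shows "nrm m (weval phi m w - weval psi m w) \<le> real (length w) * M"
proof (induction w)
  case Nil
  show ?case
    by simp
next
  case (Cons x w)
  have letter: "nrm m ((if snd x then adj (phi (fst x)) else phi (fst x))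
      - (if snd x then adj (psi (fst x)) else psi (fst x))) \<le> M"
    using close nrm_adj_diff[OF phi psi] by simp
  have "nrm m (weval phi m (x # w) - weval psi m (x # w)) \<le> M + nrm m (weval phi m w - weval psi m w)"
    using nrm_unitary_mult_diff_le weval_unitary[of m phi, OF phi] weval_unitary[of m psi, OF psi]
      phi psi letter unitary_mat_adj
    by (smt (verit) weval.simps(2))
  then show ?case
    using Cons by (simp add: algebra_simps)
qed

lemma nrm_weval_cong:
  assumes "\<And>s. unitary_mat m (phi s)"
  shows "nrm m (weval phi m (a @ u @ b) - weval phi m (a @ v @ b)) = nrm m (weval phi m u - weval phi m v)"
proof -
  let ?W = "weval phi m"
  have "?W (a @ u @ b) - ?W (a @ v @ b) = ?W a * (?W u - ?W v) * ?W b"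
    using assms weval_carrier_mat[of m phi]
    by (simp add: weval_append mult_minus_distrib_mat[of _ m m _ m] minus_mult_distrib_mat[of _ m m _ _ m]
        square_mat_closed square_mat_assoc[where m=m])
  then show ?thesis
    using assms by (simp add: nrm_unitary_invariant weval_unitary weval_carrier_mat square_mat_closed)
qed

lemma weval_word_eq_le:
  fixes R :: "'s word set"
  assumes "finite R" and "word_eq R u v"
  shows "\<exists>C. \<forall>m phi. (\<forall>s. unitary_mat m (phi s)) \<longrightarrow>
           nrm m (weval phi m u - weval phi m v) \<le> C * defect nrm R m phi"
  using assms(2)
proof (induction rule: word_eq.induct)
  case (refl u)
  show ?case
    by (rule exI[of _ 0]) (simp add: weval_carrier_mat)
next
  case (sym u v)
  then show ?case
    using nrm_diff_commute weval_carrier_mat by metis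
next
  case (trans u v w)
  then obtain C C' where
    C: "\<forall>m phi. (\<forall>s. unitary_mat m (phi s)) \<longrightarrow> nrm m (weval phi m u - weval phi m v) \<le> C * defect nrm R m phi" and
    C': "\<forall>m phi. (\<forall>s. unitary_mat m (phi s)) \<longrightarrow> nrm m (weval phi m v - weval phi m w) \<le> C' * defect nrm R m phi"
    by blast
  have "nrm m (weval phi m u - weval phi m w) \<le> (C + C') * defect nrm R m phi"
    if unitary: "\<forall>s. unitary_mat m (phi s)" for m and phi :: "'s \<Rightarrow> complex mat"
  proof -
    have "nrm m (weval phi m u - weval phi m w)
        \<le> nrm m (weval phi m u - weval phi m v) + nrm m (weval phi m v - weval phi m w)"
      using unitary by (intro nrm_diff_triangle) (simp_all add: weval_carrier_mat)
    also have "\<dots> \<le> C * defect nrm R m phi + C' * defect nrm R m phi"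
      using C C' unitary by (intro add_mono) blast+
    finally show ?thesis
      by (simp add: distrib_right)
  qed
  then show ?case
    by blast
next
  case (cong u v a b)
  then show ?case
    using nrm_weval_cong by metis
next
  case (cancel x)
  have "nrm m (weval phi m [x, inv_letter x] - weval phi m []) \<le> 0 * defect nrm R m phi"
    if "\<forall>s. unitary_mat m (phi s)" for m phi
    using weval_cancel[of m phi x] that by (simp del: weval.simps(2))
  then show ?case
    by blast
next
  case (rel r)
  have "nrm m (weval phi m r - 1\<^sub>m m) \<le> defect nrm R m phi" for m phi
    using rel assms(1) unfolding defect_def by (auto intro!: Max_ge)
  then show ?case
    by (intro exI[of _ 1]) simp
qed

lemma nrm_cocycle_minus_coboundary_le:
  assumes unitary: "unitary_mat m Tg" "unitary_mat m Th" "unitary_mat m Tgh"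
      "unitary_mat m Pg" "unitary_mat m Ph" "unitary_mat m Pgh"
      "unitary_mat m Fg" "unitary_mat m Fh" "unitary_mat m Fgh"
  shows "nrm m ((Tg * Th - Tgh) * adj Fgh
      - coboundary Fg ((Tg - Pg) * adj Fg) ((Th - Ph) * adj Fh) ((Tgh - Pgh) * adj Fgh))
    \<le> nrm m (Tg - Pg) * nrm m (Fg * Fh - Fgh) + nrm m (Th - Ph) * nrm m (Fg * Fh - Fgh)
      + nrm m (Tg - Fg) * nrm m (Th - Fh) + nrm m (Pg - Fg) * nrm m (Ph - Fh) + nrm m (Pg * Ph - Pgh)"
proof -
  note carrier = unitary[THEN unitary_mat_carrier]
  note closed = square_mat_closed[where m=m]
  define E where "E = Fg * Fh - Fgh"
  define t1 where "t1 = (Tg - Pg) * adj Fg * E * adj Fgh"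
  define t2 where "t2 = Fg * (Th - Ph) * (adj Fh * adj Fg) * E * adj Fgh"
  define t3 where "t3 = ((Tg - Fg) * (Th - Fh) - (Pg - Fg) * (Ph - Fh)) * adj Fgh"
  define t4 where "t4 = (Pg * Ph - Pgh) * adj Fgh"
  have decomp: "(Tg * Th - Tgh) * adj Fgh
      - coboundary Fg ((Tg - Pg) * adj Fg) ((Th - Ph) * adj Fh) ((Tgh - Pgh) * adj Fgh) = t1 + t2 + t3 + t4"
    unfolding t1_def t2_def t3_def t4_def E_def
    using carrier unitary by (intro cocycle_minus_coboundary_decomp)
  have t: "t1 \<in> carrier_mat m m" "t2 \<in> carrier_mat m m" "t3 \<in> carrier_mat m m" "t4 \<in> carrier_mat m m"
    unfolding t1_def t2_def t3_def t4_def E_def using carrier by (simp_all add: closed)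
  have "nrm m (t1 + t2 + t3 + t4) \<le> nrm m t1 + nrm m t2 + nrm m t3 + nrm m t4"
    using nrm_add_le[of "t1 + t2 + t3" m t4] nrm_add_le[of "t1 + t2" m t3] nrm_add_le[of t1 m t2] t
    by (simp add: closed)
  moreover have "nrm m t1 \<le> nrm m (Tg - Pg) * nrm m E"
    unfolding t1_def E_def using carrier unitary
    by (simp add: nrm_mult_unitary_le unitary_mat_adj closed)
  moreover have "nrm m t2 \<le> nrm m (Th - Ph) * nrm m E"
    unfolding t2_def E_def
    using carrier unitary nrm_mult_unitary_le[of "Fg * (Th - Ph)" m E "adj Fh * adj Fg" "adj Fgh"]
    by (simp add: nrm_unitary_mult_left unitary_mat_adj unitary_mat_mult closed E_def)
  moreover have "nrm m t3 \<le> nrm m (Tg - Fg) * nrm m (Th - Fh) + nrm m (Pg - Fg) * nrm m (Ph - Fh)"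
    unfolding t3_def using carrier unitary
    by (simp add: nrm_unitary_mult_right unitary_mat_adj nrm_diff_mult_le closed)
  moreover have "nrm m t4 = nrm m (Pg * Ph - Pgh)"
    unfolding t4_def using carrier unitary by (simp add: nrm_unitary_mult_right unitary_mat_adj closed)
  ultimately show ?thesis
    unfolding decomp E_def by linarith
qed

lemma nrm_smult_cocycle_minus_coboundary_le:
  assumes "unitary_mat m Tg" "unitary_mat m Th" "unitary_mat m Tgh"
      "unitary_mat m Pg" "unitary_mat m Ph" "unitary_mat m Pgh"
      "unitary_mat m Fg" "unitary_mat m Fh" "unitary_mat m Fgh"
  shows "nrm m ((c \<cdot>\<^sub>m (Tg * Th - Tgh)) * adj Fgh
      - coboundary Fg (c \<cdot>\<^sub>m ((Tg - Pg) * adj Fg)) (c \<cdot>\<^sub>m ((Th - Ph) * adj Fh)) (c \<cdot>\<^sub>m ((Tgh - Pgh) * adj Fgh)))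
    \<le> cmod c * (nrm m (Tg - Pg) * nrm m (Fg * Fh - Fgh) + nrm m (Th - Ph) * nrm m (Fg * Fh - Fgh)
      + nrm m (Tg - Fg) * nrm m (Th - Fh) + nrm m (Pg - Fg) * nrm m (Ph - Fh) + nrm m (Pg * Ph - Pgh))"
proof -
  note carrier = assms[THEN unitary_mat_carrier]
  note closed = square_mat_closed[where m=m]
  define X where "X = (Tg * Th - Tgh) * adj Fgh"
  define Y where "Y = coboundary Fg ((Tg - Pg) * adj Fg) ((Th - Ph) * adj Fh) ((Tgh - Pgh) * adj Fgh)"
  have XY: "X \<in> carrier_mat m m" "Y \<in> carrier_mat m m"
    unfolding X_def Y_def coboundary_def using carrier by (simp_all add: closed)
  have "(c \<cdot>\<^sub>m (Tg * Th - Tgh)) * adj Fgh = c \<cdot>\<^sub>m X"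
    unfolding X_def using carrier by (intro mult_smult_assoc_mat[of _ m m _ m]) (simp_all add: closed)
  moreover have "coboundary Fg (c \<cdot>\<^sub>m ((Tg - Pg) * adj Fg)) (c \<cdot>\<^sub>m ((Th - Ph) * adj Fh))
      (c \<cdot>\<^sub>m ((Tgh - Pgh) * adj Fgh)) = c \<cdot>\<^sub>m Y"
  proof -
    have "(Tg - Pg) * adj Fg \<in> carrier_mat m m" "(Th - Ph) * adj Fh \<in> carrier_mat m m"
        "(Tgh - Pgh) * adj Fgh \<in> carrier_mat m m"
      using carrier by (simp_all add: square_mat_closed)
    then show ?thesis
      unfolding Y_def by (rule coboundary_smult[OF carrier(7)])
  qed
  moreover have "c \<cdot>\<^sub>m X - c \<cdot>\<^sub>m Y = c \<cdot>\<^sub>m (X - Y)"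
    using XY by (intro eq_matI) (auto simp: algebra_simps)
  moreover have "nrm m (X - Y) \<le> nrm m (Tg - Pg) * nrm m (Fg * Fh - Fgh) + nrm m (Th - Ph) * nrm m (Fg * Fh - Fgh)
      + nrm m (Tg - Fg) * nrm m (Th - Fh) + nrm m (Pg - Fg) * nrm m (Ph - Fh) + nrm m (Pg * Ph - Pgh)"
    unfolding X_def Y_def by (rule nrm_cocycle_minus_coboundary_le[OF assms])
  ultimately show ?thesis
    using XY nrm_smult[of "X - Y" m c] by (simp add: closed mult_left_mono)
qed

lemma bigO_U_rescaled_bounded:
  assumes carrier: "\<And>n. A n \<in> carrier_mat (k n) (k n)"
    and bound: "bigO_U F (\<lambda>n. nrm (k n) (A n)) d"
  shows "\<exists>B. (\<forall>n. B n \<in> carrier_mat (k n) (k n)) \<and> (\<exists>C. \<forall>n. nrm (k n) (B n) \<le> C) \<and>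
    eventually (\<lambda>n. B n = (if 0 < d n then (1 / complex_of_real (d n)) \<cdot>\<^sub>m A n else 0\<^sub>m (k n) (k n))) F"
proof -
  obtain M where M: "eventually (\<lambda>n. nrm (k n) (A n) \<le> M * d n) F"
    using bound unfolding bigO_U_def by blast
  define B where "B n = (if 0 < d n \<and> nrm (k n) (A n) \<le> M * d n
      then (1 / complex_of_real (d n)) \<cdot>\<^sub>m A n else 0\<^sub>m (k n) (k n))" for n
  have "nrm (k n) (B n) \<le> max M 0" for n
  proof (cases "0 < d n \<and> nrm (k n) (A n) \<le> M * d n")
    case True
    then have "nrm (k n) (B n) = nrm (k n) (A n) / d n"
      unfolding B_def using nrm_smult[OF carrier] by (simp add: norm_divide)
    also have "\<dots> \<le> M"
      using True by (simp add: divide_le_eq)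
    finally show ?thesis
      by simp
  qed (auto simp: B_def)
  moreover have "eventually (\<lambda>n. B n = (if 0 < d n then (1 / complex_of_real (d n)) \<cdot>\<^sub>m A n else 0\<^sub>m (k n) (k n))) F"
    using M by eventually_elim (simp add: B_def)
  moreover have "B n \<in> carrier_mat (k n) (k n)" for n
    using carrier by (simp add: B_def)
  ultimately show ?thesis
    by (intro exI[of _ B] conjI exI[of _ "max M 0"] allI)
qed

end

section \<open>Triviality of the cocycle\<close>

locale perturbed_asymptotic_rep =
  fixes U :: "nat filter"
    and nrm :: "nat \<Rightarrow> complex mat \<Rightarrow> real"
    and R :: "('s::finite) word set"
    and k :: "nat \<Rightarrow> nat"
    and phi psi :: "nat \<Rightarrow> 's \<Rightarrow> complex mat"
    and sigma :: "'s word set \<Rightarrow> 's word"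
    and phit :: "nat \<Rightarrow> 's word set \<Rightarrow> complex mat"
  assumes finR: "finite R"
    and norms: "good_norm_family nrm"
    and phi_rep: "asymptotic_rep U nrm R k phi"
    and psi_unitary: "\<And>n s. unitary_mat (k n) (psi n s)"
    and close: "bigO_U U (\<lambda>n. Max (range (\<lambda>s. nrm (k n) (phi n s - psi n s))))
                          (\<lambda>n. defect nrm R (k n) (phi n))"
    and psi_small: "smallo_U U (\<lambda>n. defect nrm R (k n) (psi n))
                               (\<lambda>n. defect nrm R (k n) (phi n))"
    and sigma: "\<forall>g\<in>Gamma R. sigma g \<in> g"
    and phit_unitary: "\<forall>n. \<forall>g\<in>Gamma R. unitary_mat (k n) (phit n g)"
    and phit_close: "\<forall>g\<in>Gamma R. bigO_U U
                       (\<lambda>n. nrm (k n) (weval (phi n) (k n) (sigma g) - phit n g))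
                       (\<lambda>n. defect nrm R (k n) (phi n))"
begin

abbreviation d :: "nat \<Rightarrow> real" where
  "d n \<equiv> defect nrm R (k n) (phi n)"

abbreviation Phi :: "'s word set \<Rightarrow> nat \<Rightarrow> complex mat" where
  "Phi x n \<equiv> weval (phi n) (k n) (sigma x)"

abbreviation Psi :: "'s word set \<Rightarrow> nat \<Rightarrow> complex mat" where
  "Psi x n \<equiv> weval (psi n) (k n) (sigma x)"

lemma phi_unitary: "unitary_mat (k n) (phi n s)"
  using phi_rep unfolding asymptotic_rep_def by blast

lemma Phi_unitary: "unitary_mat (k n) (Phi x n)"
  by (rule weval_unitary) (rule phi_unitary)

lemma Psi_unitary: "unitary_mat (k n) (Psi x n)"
  by (rule weval_unitary) (rule psi_unitary)

lemma phit_unitary_mat: "x \<in> Gamma R \<Longrightarrow> unitary_mat (k n) (phit n x)"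
  using phit_unitary by blast

lemma Phi_carrier [simp]: "Phi x n \<in> carrier_mat (k n) (k n)"
  using Phi_unitary by (rule unitary_mat_carrier)

lemma Psi_carrier [simp]: "Psi x n \<in> carrier_mat (k n) (k n)"
  using Psi_unitary by (rule unitary_mat_carrier)

lemma phit_carrier [simp]: "x \<in> Gamma R \<Longrightarrow> phit n x \<in> carrier_mat (k n) (k n)"
  using phit_unitary_mat by (rule unitary_mat_carrier)

lemma d_nonneg: "0 \<le> d n"
  using defect_nonneg[OF norms finR phi_unitary] .

lemma d_tendsto_zero: "(d \<longlongrightarrow> 0) U"
  using phi_rep unfolding asymptotic_rep_def by blast

lemma phit_Phi_close: "x \<in> Gamma R \<Longrightarrow> bigO_U U (\<lambda>n. nrm (k n) (phit n x - Phi x n)) d"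
  using phit_close nrm_diff_commute[OF norms] Phi_unitary phit_unitary_mat
  by (simp add: unitary_mat_carrier)

lemma Psi_Phi_close: "bigO_U U (\<lambda>n. nrm (k n) (Psi x n - Phi x n)) d"
proof -
  obtain C where C: "eventually (\<lambda>n. Max (range (\<lambda>s. nrm (k n) (phi n s - psi n s))) \<le> C * d n) U"
    using close unfolding bigO_U_def by blast
  have "eventually (\<lambda>n. nrm (k n) (Psi x n - Phi x n) \<le> (real (length (sigma x)) * C) * d n) U"
    using C
  proof eventually_elim
    case (elim n)
    have "nrm (k n) (Psi x n - Phi x n) = nrm (k n) (Phi x n - Psi x n)"
      using nrm_diff_commute[OF norms] Phi_unitary Psi_unitary by (simp add: unitary_mat_carrier)
    also have "\<dots> \<le> real (length (sigma x)) * Max (range (\<lambda>s. nrm (k n) (phi n s - psi n s)))"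
      by (rule weval_diff_le[OF norms phi_unitary psi_unitary]) simp
    also have "\<dots> \<le> real (length (sigma x)) * (C * d n)"
      using elim by (intro mult_left_mono) simp_all
    finally show ?case
      by (simp add: mult.assoc)
  qed
  then show ?thesis
    unfolding bigO_U_def by blast
qed

lemma phit_Psi_close: "x \<in> Gamma R \<Longrightarrow> bigO_U U (\<lambda>n. nrm (k n) (phit n x - Psi x n)) d"
proof (rule bigO_U_le[OF _ bigO_U_add[OF phit_Phi_close Psi_Phi_close]])
  fix n
  assume "x \<in> Gamma R"
  then show "nrm (k n) (phit n x - Psi x n) \<le> nrm (k n) (phit n x - Phi x n) + nrm (k n) (Psi x n - Phi x n)"
    using nrm_diff_triangle[OF norms] nrm_diff_commute[OF norms] phit_unitary_mat Phi_unitary Psi_unitary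
    by (metis unitary_mat_carrier)
qed

lemma word_eq_sigma_gmul:
  "g \<in> Gamma R \<Longrightarrow> h \<in> Gamma R \<Longrightarrow> word_eq R (sigma g @ sigma h) (sigma (gmul R g h))"
  using sigma gmul_Gamma by (blast intro: word_eq_if_mem_gmul)

lemma weval_sigma_mult_le:
  assumes "g \<in> Gamma R" "h \<in> Gamma R"
  obtains C where "\<And>m phi. (\<And>s. unitary_mat m (phi s)) \<Longrightarrow>
    nrm m (weval phi m (sigma g) * weval phi m (sigma h) - weval phi m (sigma (gmul R g h)))
      \<le> C * defect nrm R m phi"
proof -
  obtain C where "\<forall>m phi. (\<forall>s. unitary_mat m (phi s)) \<longrightarrow>
      nrm m (weval phi m (sigma g @ sigma h) - weval phi m (sigma (gmul R g h))) \<le> C * defect nrm R m phi"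
    using weval_word_eq_le[OF norms finR word_eq_sigma_gmul[OF assms]] by blast
  then have "nrm m (weval phi m (sigma g) * weval phi m (sigma h) - weval phi m (sigma (gmul R g h)))
      \<le> C * defect nrm R m phi" if "\<And>s. unitary_mat m (phi s)" for m and phi :: "'s \<Rightarrow> complex mat"
    using that by (simp add: weval_append)
  then show ?thesis
    by (rule that)
qed

lemma Phi_mult_close:
  assumes "g \<in> Gamma R" "h \<in> Gamma R"
  shows "bigO_U U (\<lambda>n. nrm (k n) (Phi g n * Phi h n - Phi (gmul R g h) n)) d"
proof -
  obtain C where "nrm (k n) (Phi g n * Phi h n - Phi (gmul R g h) n) \<le> C * d n" for n
    using weval_sigma_mult_le[OF assms] phi_unitary by metis
  then show ?thesis
    unfolding bigO_U_def by (blast intro: always_eventually)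
qed

lemma Psi_mult_small:
  assumes "g \<in> Gamma R" "h \<in> Gamma R"
  shows "((\<lambda>n. nrm (k n) (Psi g n * Psi h n - Psi (gmul R g h) n) / d n) \<longlongrightarrow> 0) U"
proof -
  obtain C where "nrm (k n) (Psi g n * Psi h n - Psi (gmul R g h) n) \<le> C * defect nrm R (k n) (psi n)" for n
    using weval_sigma_mult_le[OF assms] psi_unitary by metis
  then show ?thesis
    using psi_small d_nonneg
    by (intro smallo_U_div_tendsto_zero) (simp_all add: nrm_nonneg[OF norms] square_mat_closed)
qed

definition trivializing_cochain :: "'s word set \<Rightarrow> nat \<Rightarrow> complex mat" where
  "trivializing_cochain x n = (if 0 < d n
     then (1 / complex_of_real (d n)) \<cdot>\<^sub>m ((phit n x - Psi x n) * adj (Phi x n)) else 0\<^sub>m (k n) (k n))"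

lemma trivializing_cochain_carrier [simp]:
  "x \<in> Gamma R \<Longrightarrow> trivializing_cochain x n \<in> carrier_mat (k n) (k n)"
  unfolding trivializing_cochain_def by (simp add: square_mat_closed)

lemma cocycle_alpha_carrier [simp]:
  "g \<in> Gamma R \<Longrightarrow> h \<in> Gamma R \<Longrightarrow> cocycle_alpha nrm R k phi sigma phit g h n \<in> carrier_mat (k n) (k n)"
  unfolding cocycle_alpha_def cocycle_c_def Let_def by (simp add: gmul_Gamma square_mat_closed)

lemma cocycle_alpha_minus_coboundary_le:
  assumes g: "g \<in> Gamma R" and h: "h \<in> Gamma R"
  defines "gh \<equiv> gmul R g h"
  shows "nrm (k n) (cocycle_alpha nrm R k phi sigma phit g h n
      - coboundary (Phi g n) (trivializing_cochain g n) (trivializing_cochain h n) (trivializing_cochain gh n))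
    \<le> (nrm (k n) (phit n g - Psi g n) * nrm (k n) (Phi g n * Phi h n - Phi gh n)
      + nrm (k n) (phit n h - Psi h n) * nrm (k n) (Phi g n * Phi h n - Phi gh n)
      + nrm (k n) (phit n g - Phi g n) * nrm (k n) (phit n h - Phi h n)
      + nrm (k n) (Psi g n - Phi g n) * nrm (k n) (Psi h n - Phi h n)
      + nrm (k n) (Psi g n * Psi h n - Psi gh n)) / d n"
proof (cases "0 < d n")
  case True
  have gh: "gh \<in> Gamma R"
    unfolding gh_def using g h by (rule gmul_Gamma)
  have "cmod (1 / complex_of_real (d n)) = 1 / d n"
    using True by (simp add: norm_divide)
  then show ?thesis
    using nrm_smult_cocycle_minus_coboundary_le[OF norms phit_unitary_mat[OF g] phit_unitary_mat[OF h]
        phit_unitary_mat[OF gh] Psi_unitary Psi_unitary Psi_unitary Phi_unitary Phi_unitary Phi_unitary,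
        where c="1 / complex_of_real (d n)"] True
    by (simp add: cocycle_alpha_def cocycle_c_def trivializing_cochain_def gh_def)
next
  case False
  then have "cocycle_alpha nrm R k phi sigma phit g h n = 0\<^sub>m (k n) (k n)"
    by (simp add: cocycle_alpha_def cocycle_c_def left_mult_zero_mat[of _ "k n" "k n"])
  moreover have "d n = 0"
    using False d_nonneg[of n] by simp
  ultimately show ?thesis
    by (simp add: trivializing_cochain_def coboundary_zero nrm_diff_self[OF norms])
qed

lemma cocycle_alpha_minus_coboundary_tendsto_zero:
  assumes g: "g \<in> Gamma R" and h: "h \<in> Gamma R"
  shows "((\<lambda>n. nrm (k n) (cocycle_alpha nrm R k phi sigma phit g h n
      - coboundary (Phi g n) (trivializing_cochain g n) (trivializing_cochain h n)
          (trivializing_cochain (gmul R g h) n))) \<longlongrightarrow> 0) U"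
proof -
  let ?gh = "gmul R g h"
  have gh: "?gh \<in> Gamma R"
    using g h by (rule gmul_Gamma)
  have nonneg: "0 \<le> nrm (k n) A" if "A \<in> carrier_mat (k n) (k n)" for A n
    using that by (rule nrm_nonneg[OF norms])
  have lim: "((\<lambda>n. nrm (k n) (phit n g - Psi g n) * nrm (k n) (Phi g n * Phi h n - Phi ?gh n) / d n
      + nrm (k n) (phit n h - Psi h n) * nrm (k n) (Phi g n * Phi h n - Phi ?gh n) / d n
      + nrm (k n) (phit n g - Phi g n) * nrm (k n) (phit n h - Phi h n) / d n
      + nrm (k n) (Psi g n - Phi g n) * nrm (k n) (Psi h n - Phi h n) / d n
      + nrm (k n) (Psi g n * Psi h n - Psi ?gh n) / d n) \<longlongrightarrow> 0) U"
    using tendsto_add[OF tendsto_add[OF tendsto_add[OF tendsto_add[OF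
        bigO_U_mult_div_tendsto_zero[OF nonneg nonneg d_nonneg phit_Psi_close[OF g] Phi_mult_close[OF g h] d_tendsto_zero]
        bigO_U_mult_div_tendsto_zero[OF nonneg nonneg d_nonneg phit_Psi_close[OF h] Phi_mult_close[OF g h] d_tendsto_zero]]
        bigO_U_mult_div_tendsto_zero[OF nonneg nonneg d_nonneg phit_Phi_close[OF g] phit_Phi_close[OF h] d_tendsto_zero]]
        bigO_U_mult_div_tendsto_zero[OF nonneg nonneg d_nonneg Psi_Phi_close Psi_Phi_close d_tendsto_zero]]
        Psi_mult_small[OF g h]]
    using g h gh by (simp add: square_mat_closed)
  show ?thesis
    by (rule tendsto_sandwich[OF _ _ tendsto_const lim])
      (use cocycle_alpha_minus_coboundary_le[OF g h] g h gh in
        \<open>simp_all add: nonneg add_divide_distrib always_eventually coboundary_def square_mat_closed\<close>)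
qed

lemma bounded_trivializing_cochain:
  assumes "x \<in> Gamma R"
  shows "\<exists>B. (\<forall>n. B n \<in> carrier_mat (k n) (k n)) \<and> (\<exists>C. \<forall>n. nrm (k n) (B n) \<le> C) \<and>
    eventually (\<lambda>n. B n = trivializing_cochain x n) U"
proof -
  have "nrm (k n) ((phit n x - Psi x n) * adj (Phi x n)) = nrm (k n) (phit n x - Psi x n)" for n
    using assms by (simp add: nrm_unitary_mult_right[OF norms] unitary_mat_adj Phi_unitary square_mat_closed)
  then have "bigO_U U (\<lambda>n. nrm (k n) ((phit n x - Psi x n) * adj (Phi x n))) d"
    using phit_Psi_close[OF assms] by simp
  then show ?thesis
    unfolding trivializing_cochain_def using assms
    by (intro bigO_U_rescaled_bounded[OF norms]) (simp add: square_mat_closed)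
qed

lemma cocycle_alpha_coboundary:
  "\<exists>beta. (\<forall>g\<in>Gamma R. (\<forall>n. beta g n \<in> carrier_mat (k n) (k n)) \<and> (\<exists>C. \<forall>n. nrm (k n) (beta g n) \<le> C)) \<and>
     (\<forall>g\<in>Gamma R. \<forall>h\<in>Gamma R. ((\<lambda>n. nrm (k n) (cocycle_alpha nrm R k phi sigma phit g h n
        - coboundary (Phi g n) (beta g n) (beta h n) (beta (gmul R g h) n))) \<longlongrightarrow> 0) U)"
proof -
  have "\<forall>x\<in>Gamma R. \<exists>B. (\<forall>n. B n \<in> carrier_mat (k n) (k n)) \<and> (\<exists>C. \<forall>n. nrm (k n) (B n) \<le> C) \<and>
      eventually (\<lambda>n. B n = trivializing_cochain x n) U"
    using bounded_trivializing_cochain by blast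
  from bchoice[OF this] obtain beta where
    beta: "\<forall>x\<in>Gamma R. (\<forall>n. beta x n \<in> carrier_mat (k n) (k n)) \<and>
      (\<exists>C. \<forall>n. nrm (k n) (beta x n) \<le> C) \<and> eventually (\<lambda>n. beta x n = trivializing_cochain x n) U"
    by blast
  have "((\<lambda>n. nrm (k n) (cocycle_alpha nrm R k phi sigma phit g h n
      - coboundary (Phi g n) (beta g n) (beta h n) (beta (gmul R g h) n))) \<longlongrightarrow> 0) U"
    if g: "g \<in> Gamma R" and h: "h \<in> Gamma R" for g h
  proof -
    have "eventually (\<lambda>n. beta g n = trivializing_cochain g n) U"
        "eventually (\<lambda>n. beta h n = trivializing_cochain h n) U"
        "eventually (\<lambda>n. beta (gmul R g h) n = trivializing_cochain (gmul R g h) n) U"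
      using beta g h gmul_Gamma[OF g h] by blast+
    then have "eventually (\<lambda>n.
        nrm (k n) (cocycle_alpha nrm R k phi sigma phit g h n - coboundary (Phi g n)
          (trivializing_cochain g n) (trivializing_cochain h n) (trivializing_cochain (gmul R g h) n)) =
        nrm (k n) (cocycle_alpha nrm R k phi sigma phit g h n
          - coboundary (Phi g n) (beta g n) (beta h n) (beta (gmul R g h) n))) U"
      by eventually_elim simp
    from tendsto_cong[OF this] show ?thesis
      using cocycle_alpha_minus_coboundary_tendsto_zero[OF g h] by simp
  qed
  with beta show ?thesis
    by (intro exI[of _ beta] conjI) blast+
qed

end

theorem proposition3p7:
  fixes U :: "nat filter"
    and nrm :: "nat \<Rightarrow> complex mat \<Rightarrow> real"
    and R :: "('s::finite) word set"
    and k :: "nat \<Rightarrow> nat"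
    and phi psi :: "nat \<Rightarrow> 's \<Rightarrow> complex mat"
    and sigma :: "'s word set \<Rightarrow> 's word"
    and phit :: "nat \<Rightarrow> 's word set \<Rightarrow> complex mat"
  assumes U: "nonprincipal_ultrafilter U"
    and finR: "finite R"
    and norms: "good_norm_family nrm"
    and phi_rep: "asymptotic_rep U nrm R k phi"
    and psi_rep: "asymptotic_rep U nrm R k psi"
    and close: "bigO_U U (\<lambda>n. Max (range (\<lambda>s. nrm (k n) (phi n s - psi n s))))
                          (\<lambda>n. defect nrm R (k n) (phi n))"
    and psi_small: "smallo_U U (\<lambda>n. defect nrm R (k n) (psi n))
                               (\<lambda>n. defect nrm R (k n) (phi n))"
    and sigma: "\<forall>g\<in>Gamma R. sigma g \<in> g"
    and phit_unitary: "\<forall>n. \<forall>g\<in>Gamma R. unitary_mat (k n) (phit n g)"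
    and phit_one: "\<forall>n. phit n (gone R) = 1\<^sub>m (k n)"
    and phit_inv: "\<forall>n. \<forall>g\<in>Gamma R. phit n (ginv R g) = adj (phit n g)"
    and phit_close: "\<forall>g\<in>Gamma R. bigO_U U
                       (\<lambda>n. nrm (k n) (weval (phi n) (k n) (sigma g) - phit n g))
                       (\<lambda>n. defect nrm R (k n) (phi n))"
  shows "\<exists>beta :: 's word set \<Rightarrow> nat \<Rightarrow> complex mat.
           (\<forall>g\<in>Gamma R. (\<forall>n. beta g n \<in> carrier_mat (k n) (k n)) \<and>
                         (\<exists>C. \<forall>n. nrm (k n) (beta g n) \<le> C)) \<and>
           (\<forall>g\<in>Gamma R. \<forall>h\<in>Gamma R.
              ((\<lambda>n. nrm (k n)
                  (cocycle_alpha nrm R k phi sigma phit g h n -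
                   (weval (phi n) (k n) (sigma g) * beta h n * adj (weval (phi n) (k n) (sigma g))
                    - beta (gmul R g h) n + beta g n))) \<longlongrightarrow> 0) U)"
proof -
  \<comment> \<open>The argument works along any filter.\<close>
  have psi_unitary: "\<And>n s. unitary_mat (k n) (psi n s)"
    using psi_rep unfolding asymptotic_rep_def by blast
  interpret perturbed_asymptotic_rep U nrm R k phi psi sigma phit
    using finR norms phi_rep psi_unitary close psi_small sigma phit_unitary phit_close
    by (rule perturbed_asymptotic_rep.intro)
  show ?thesis
    using cocycle_alpha_coboundary unfolding coboundary_def .
qed

end
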